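(* Let $(V^n,g)$ be a Euclidean vector space, $\mathfrak{g}\subseteq\mathfrak{so}(V)$ a Lie subalgebra and $T\in\Lambda^3V\cap(\Lambda^1V\otimes\mathfrak{g})$. Define $R^T(X,Y)=[T_X,T_Y]+2T_{T_XY}$ and $\Omega^T=\frac12\sum_{i}T_{e_i}\wedge T_{e_i}\in\Lambda^4V$. Then: (i) $R^T\in\mathcal{K}(\mathfrak{g},V)$; (ii) $\Omega^T\in\Lambda^4V\cap(\Lambda^2V\otimes\mathfrak{g})$; (iii) $R^T=0$ if and only if $T=0$; (iv) if moreover $(\mathfrak{g},V)$ is irreducible and $\dim\mathcal{K}(\mathfrak{g},V)=1$, then $\langle X\lrcorner T,Y\lrcorner T\rangle=\frac3n|T|^2\langle X,Y\rangle$ for all $X,Y\in V$.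
   Context: $\Lambda^2V$ is identified with $\mathfrak{so}(V)$ via $F\mapsto g(F\cdot,\cdot)$, with the standard inner product on forms ($e_{i_1}\wedge\dots\wedge e_{i_p}$, $i_1<\dots<i_p$, orthonormal). For $T\in\Lambda^3V$, $T_X\in\mathfrak{so}(V)$ is defined by $g(T_X\cdot,\cdot)=X\lrcorner T$; $\{e_i\}$ is an orthonormal basis. $\Lambda^3V\cap(\Lambda^1V\otimes\mathfrak{g})=\{T\in\Lambda^3V:X\lrcorner T\in\mathfrak{g}\ \forall X\}$ and $\Lambda^4V\cap(\Lambda^2V\otimes\mathfrak{g})=\{\beta\in\Lambda^4V:X\lrcorner Y\lrcorner\beta\in\mathfrak{g}\ \forall X,Y\}$. $\mathcal{K}(\mathfrak{g},V)$ is the space of $R\in\Lambda^2V\otimes\Lambda^2V$ with $R(X,Y)\in\mathfrak{g}$ for all $X,Y$ satisfying the first Bianchi identity $\sum_ie_i\wedge R(e_i,X)=0$ for all $X$. *)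

theory Defs
  imports "HOL-Analysis.Analysis"
begin

text \<open>V = real^'n with the standard (orthonormal) basis e i = axis i 1;
  n = CARD('n).  so(V) = skew-symmetric matrices real^'n^'n (acting by *v).
  A 2-form F is identified with the matrix M in so(V) such that F(Y,Z) = (M *v Y) \<bullet> Z.
  p-forms for p = 3,4 are stored by their components on the basis (alternating arrays).\<close>

definition e :: "'n::finite \<Rightarrow> real^'n" where
  "e i = axis i 1"

definition f2 :: "real^'n^'n \<Rightarrow> real^'n \<Rightarrow> real^'n \<Rightarrow> real" where
  "f2 M Y Z = (M *v Y) \<bullet> Z"

definition skew :: "real^'n^'n \<Rightarrow> bool" where
  "skew M \<longleftrightarrow> transpose M = - M"

definition lie_subalgebra_so :: "(real^'n^'n) set \<Rightarrow> bool" where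
  "lie_subalgebra_so g \<longleftrightarrow> subspace g \<and> (\<forall>A\<in>g. skew A) \<and>
     (\<forall>A\<in>g. \<forall>B\<in>g. A ** B - B ** A \<in> g)"

text \<open>Lambda^3 V: alternating arrays T \$ i \$ j \$ k = T(e_i,e_j,e_k)\<close>
definition alt3 :: "real^'n^'n^'n \<Rightarrow> bool" where
  "alt3 T \<longleftrightarrow> (\<forall>i j k. T$j$i$k = - T$i$j$k \<and> T$i$k$j = - T$i$j$k)"

definition alt4 :: "real^'n^'n^'n^'n \<Rightarrow> bool" where
  "alt4 B \<longleftrightarrow> (\<forall>a b c d. B$b$a$c$d = - B$a$b$c$d \<and> B$a$c$b$d = - B$a$b$c$d
                          \<and> B$a$b$d$c = - B$a$b$c$d)"

text \<open>T_X in so(V): g(T_X Y, Z) = (X \<lrcorner> T)(Y,Z) = T(X,Y,Z)\<close>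
definition Tx :: "real^'n^'n^'n \<Rightarrow> real^'n \<Rightarrow> real^'n^'n" where
  "Tx T X = (\<chi> k j. \<Sum>i\<in>UNIV. X$i * T$i$j$k)"

definition L3g :: "(real^'n^'n) set \<Rightarrow> (real^'n^'n^'n) set" where
  "L3g g = {T. alt3 T \<and> (\<forall>X. Tx T X \<in> g)}"

text \<open>X \<lrcorner> Y \<lrcorner> \<beta> for a 4-form, as an element of so(V):
  (X \<lrcorner> (Y \<lrcorner> \<beta>))(v,w) = \<beta>(Y,X,v,w)\<close>
definition ins2 :: "real^'n^'n^'n^'n \<Rightarrow> real^'n \<Rightarrow> real^'n \<Rightarrow> real^'n^'n" where
  "ins2 B X Y = (\<chi> k j. \<Sum>a\<in>UNIV. \<Sum>b\<in>UNIV. Y$a * X$b * B$a$b$j$k)"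

definition L4g :: "(real^'n^'n) set \<Rightarrow> (real^'n^'n^'n^'n) set" where
  "L4g g = {B. alt4 B \<and> (\<forall>X Y. ins2 B X Y \<in> g)}"

text \<open>Lambda^2 V \<otimes> Lambda^2 V: R \$ i \$ j = R(e_i,e_j) \<in> so(V) = Lambda^2 V\<close>
definition L2L2 :: "real^'n^'n^'n^'n \<Rightarrow> bool" where
  "L2L2 R \<longleftrightarrow> (\<forall>i j. R$j$i = - R$i$j) \<and> (\<forall>i j. skew (R$i$j))"

definition Rapp :: "real^'n^'n^'n^'n \<Rightarrow> real^'n \<Rightarrow> real^'n \<Rightarrow> real^'n^'n" where
  "Rapp R X Y = (\<Sum>i\<in>UNIV. \<Sum>j\<in>UNIV. (X$i * Y$j) *\<^sub>R R$i$j)"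

text \<open>wedge of a 1-form (vector a, via g) with a 2-form (matrix M); result a 3-form\<close>
definition wedge12 :: "real^'n \<Rightarrow> real^'n^'n \<Rightarrow> real^'n^'n^'n" where
  "wedge12 a M = (\<chi> i j k. a$i * f2 M (e j) (e k) - a$j * f2 M (e i) (e k)
                             + a$k * f2 M (e i) (e j))"

text \<open>wedge of two 2-forms; result a 4-form (determinant convention,
  e_1\<and>e_2\<and>e_3\<and>e_4 evaluates to 1 on (e_1,e_2,e_3,e_4))\<close>
definition wedge22 :: "real^'n^'n \<Rightarrow> real^'n^'n \<Rightarrow> real^'n^'n^'n^'n" where
  "wedge22 M N = (\<chi> a b c d.
      f2 M (e a) (e b) * f2 N (e c) (e d) - f2 M (e a) (e c) * f2 N (e b) (e d)
    + f2 M (e a) (e d) * f2 N (e b) (e c) + f2 M (e b) (e c) * f2 N (e a) (e d)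
    - f2 M (e b) (e d) * f2 N (e a) (e c) + f2 M (e c) (e d) * f2 N (e a) (e b))"

definition Kspace :: "(real^'n^'n) set \<Rightarrow> (real^'n^'n^'n^'n) set" where
  "Kspace g = {R. L2L2 R \<and> (\<forall>X Y. Rapp R X Y \<in> g) \<and>
                 (\<forall>X. (\<Sum>i\<in>UNIV. wedge12 (e i) (Rapp R (e i) X)) = 0)}"

definition RTfun :: "real^'n^'n^'n \<Rightarrow> real^'n \<Rightarrow> real^'n \<Rightarrow> real^'n^'n" where
  "RTfun T X Y = (Tx T X ** Tx T Y - Tx T Y ** Tx T X) + 2 *\<^sub>R Tx T (Tx T X *v Y)"

definition RT :: "real^'n^'n^'n \<Rightarrow> real^'n^'n^'n^'n" where
  "RT T = (\<chi> i j. RTfun T (e i) (e j))"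

definition OmegaT :: "real^'n^'n^'n \<Rightarrow> real^'n^'n^'n^'n" where
  "OmegaT T = (1/2) *\<^sub>R (\<Sum>i\<in>UNIV. wedge22 (Tx T (e i)) (Tx T (e i)))"

text \<open>inner product of forms (e_I, I increasing, orthonormal); for alternating
  forms \<Sum>_{i<j} = (1/2) \<Sum>_{i,j} and \<Sum>_{i<j<k} = (1/6) \<Sum>_{i,j,k}\<close>
definition inner2 :: "real^'n^'n \<Rightarrow> real^'n^'n \<Rightarrow> real" where
  "inner2 M N = (1/2) * (\<Sum>i\<in>UNIV. \<Sum>j\<in>UNIV. f2 M (e i) (e j) * f2 N (e i) (e j))"

definition normsq3 :: "real^'n^'n^'n \<Rightarrow> real" where
  "normsq3 T = (1/6) * (\<Sum>i\<in>UNIV. \<Sum>j\<in>UNIV. \<Sum>k\<in>UNIV. (T$i$j$k)^2)"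

definition irreducible_so :: "(real^'n^'n) set \<Rightarrow> bool" where
  "irreducible_so g \<longleftrightarrow> (\<forall>W. subspace W \<and> (\<forall>A\<in>g. \<forall>x\<in>W. A *v x \<in> W)
                          \<longrightarrow> W = {0} \<or> W = UNIV)"

end

theory Submission
  imports Defs
begin

(* T is handled as the alternating trilinear form tri T u v w = g(T_u v, w).  Everything
   rests on the expansion R^T(u,v)(w,z) = g(T_u w,T_v z) - g(T_u z,T_v w) + 2 g(T_u v,T_w z)
   (RT_eval).  From it: (i) R^T is antisymmetric, so(V)-valued, g-valued and satisfies the
   Bianchi identity (its cyclic terms cancel in pairs); (iii) R^T(u,v)(v,u) = -3|T_u v|^2;
   and the Ricci-type contraction of R^T is -6 S_T with S_T(X,Y) = <T_X,T_Y>.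
   (ii) follows from the contraction identity e_b _| e_a _| Omega^T = [T_b,T_a] + T_{T_a b}.
   (iv): K(g,V) is a subspace; for A in g the infinitesimal action A.T stays in the same
   space, so R^{T+A.T} - R^T - R^{A.T} = c R^T by one-dimensionality.  Contracting and using
   ad-invariance of the inner product on so(V) gives S(AX,Y) + S(X,AY) = -c S(X,Y); the trace
   forces c = 0.  Hence the symmetric operator representing S_T commutes with g, and Schur's
   lemma (proved via a maximiser of the Rayleigh quotient) makes it scalar; the trace of S_T,
   3|T|^2, determines the scalar. *)

lemma e_nth: "e i $ a = (if a = i then 1 else 0)"
  by (simp add: e_def axis_def)

lemma inner_e: "x \<bullet> e k = x $ k"
  by (simp add: e_def inner_axis)

lemma mv_e: "((M::real^'n^'m) *v e j) $ k = M$k$j"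
  by (simp add: matrix_vector_mult_def e_nth if_distrib cong: if_cong)

lemma f2_e: "f2 M (e j) (e k) = M$k$j"
  unfolding f2_def inner_e mv_e ..

lemma sum_e: "(\<Sum>l\<in>UNIV. e b $ l * (f l::real)) = f b"
  by (simp add: e_nth if_distrib if_distribR cong: if_cong)

lemma linear_exp:
  fixes f :: "real^'n \<Rightarrow> 'b::real_vector"
  assumes "linear f" shows "f u = (\<Sum>i\<in>UNIV. u$i *\<^sub>R f (e i))"
proof -
  have "u = (\<Sum>i\<in>UNIV. u$i *\<^sub>R e i)"
    using basis_expansion[of u] by (simp add: scalar_mult_eq_scaleR e_def)
  then have "f u = f (\<Sum>i\<in>UNIV. u$i *\<^sub>R e i)" by simp
  also have "\<dots> = (\<Sum>i\<in>UNIV. u$i *\<^sub>R f (e i))"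
    by (simp add: linear_sum[OF assms] linear_scale[OF assms])
  finally show ?thesis .
qed

lemma sum_reverse3:
  "(\<Sum>k\<in>C. \<Sum>j\<in>B. \<Sum>i\<in>A. (f i j k :: 'a::comm_monoid_add)) = (\<Sum>i\<in>A. \<Sum>j\<in>B. \<Sum>k\<in>C. f i j k)"
  by (subst (2) sum.swap, subst sum.swap, rule sum.cong[OF refl], rule sum.swap)

lemma antisym_sum_zero:
  assumes "\<And>i j. f i j = - f j i"
  shows "(\<Sum>i\<in>UNIV. \<Sum>j\<in>(UNIV::'n::finite set). (f i j :: real)) = 0"
proof -
  have "(\<Sum>i\<in>UNIV. \<Sum>j\<in>(UNIV::'n set). f i j) = (\<Sum>j\<in>UNIV. \<Sum>i\<in>UNIV. - f j i)"
    by (subst sum.swap) (intro sum.cong refl assms)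
  also have "\<dots> = - (\<Sum>i\<in>UNIV. \<Sum>j\<in>(UNIV::'n set). f i j)"
    by (simp add: sum_negf)
  finally show ?thesis by simp
qed

lemma matrix_add_rdistrib: "((A::'a::semiring_1^'n^'m) + B) ** C = A ** C + B ** C"
  by (simp add: matrix_matrix_mult_def vec_eq_iff algebra_simps sum.distrib)

lemma matrix_diff_rdistrib: "((A::'a::ring_1^'n^'m) - B) ** C = A ** C - B ** C"
  by (simp add: matrix_matrix_mult_def vec_eq_iff algebra_simps sum_subtractf)

lemma matrix_diff_ldistrib: "(A::'a::ring_1^'n^'m) ** (B - C) = A ** B - A ** C"
  by (simp add: matrix_matrix_mult_def vec_eq_iff algebra_simps sum_subtractf)

lemma matrix_scaleR_left: "((c *\<^sub>R A)::'a::real_algebra_1^'n^'m) ** B = c *\<^sub>R (A ** B)"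
  by (simp add: scalar_matrix_assoc)

lemma matrix_scaleR_right: "(A::'a::real_algebra_1^'n^'m) ** (c *\<^sub>R B) = c *\<^sub>R (A ** B)"
  by (simp add: matrix_scalar_ac scalar_matrix_assoc)

lemma matrix_neg_left: "(- (A::'a::ring_1^'n^'m)) ** B = - (A ** B)"
  by (simp add: matrix_matrix_mult_def vec_eq_iff sum_negf)

lemma matrix_neg_right: "(A::'a::ring_1^'n^'m) ** (- B) = - (A ** B)"
  by (simp add: matrix_matrix_mult_def vec_eq_iff sum_negf)

lemma matrix_vector_scaleR_left: "((c *\<^sub>R A)::real^'n^'m) *v x = c *\<^sub>R (A *v x)"
  by (simp add: vec_eq_iff matrix_vector_mult_def sum_distrib_left algebra_simps)

lemma transpose_add: "transpose ((A::'a::plus^'n^'m) + B) = transpose A + transpose B"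
  by (simp add: transpose_def vec_eq_iff)

lemma transpose_diff: "transpose ((A::'a::minus^'n^'m) - B) = transpose A - transpose B"
  by (simp add: transpose_def vec_eq_iff)

lemma skew_zero: "skew (0::real^'n^'n)"
  by (simp add: skew_def transpose_def vec_eq_iff)

lemma skew_add: "skew A \<Longrightarrow> skew B \<Longrightarrow> skew ((A::real^'n^'n) + B)"
  by (simp add: skew_def transpose_add)

lemma skew_scale: "skew A \<Longrightarrow> skew (c *\<^sub>R (A::real^'n^'n))"
  by (simp add: skew_def transpose_scalar)

lemma skew_bracket: "skew A \<Longrightarrow> skew B \<Longrightarrow> skew ((A::real^'n^'n) ** B - B ** A)"
  unfolding skew_def transpose_diff matrix_transpose_mul
  by (simp add: matrix_neg_left matrix_neg_right)

lemma skew_entry: assumes "skew A" shows "A$i$j = - A$j$i"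
proof -
  have "transpose A $ j $ i = (- A) $ j $ i" using assms by (simp add: skew_def)
  then show ?thesis by (simp add: transpose_def)
qed

lemma skew_inner: assumes "skew M" shows "(M *v y) \<bullet> z = - ((M *v z) \<bullet> y)"
proof -
  have "(M *v y) \<bullet> z = (y v* transpose M) \<bullet> z" by simp
  also have "\<dots> = y \<bullet> (transpose M *v z)" by (rule dot_lmul_matrix)
  also have "transpose M *v z = - (M *v z)"
    using assms by (simp add: skew_def vec_eq_iff matrix_vector_mult_def sum_negf)
  finally show ?thesis by (simp add: inner_commute)
qed

lemma lieD: assumes "lie_subalgebra_so g"
  shows "subspace g" "A \<in> g \<Longrightarrow> skew A" "A \<in> g \<Longrightarrow> B \<in> g \<Longrightarrow> A ** B - B ** A \<in> g"
  using assms unfolding lie_subalgebra_so_def by blast+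

definition tri :: "real^'n^'n^'n \<Rightarrow> real^'n \<Rightarrow> real^'n \<Rightarrow> real^'n \<Rightarrow> real" where
  "tri T u v w = f2 (Tx T u) v w"

lemma Tx_nth: "Tx T X $ k $ j = (\<Sum>i\<in>UNIV. X$i * T$i$j$k)"
  by (simp add: Tx_def)

lemma Tx_e: "Tx T (e i) $ k $ j = T$i$j$k"
  unfolding Tx_nth by (rule sum_e)

lemma tri_basis: "tri T (e i) (e j) (e k) = T$i$j$k"
  unfolding tri_def f2_e Tx_e ..

lemma tri_sum: "tri T u v w = (\<Sum>i\<in>UNIV. \<Sum>j\<in>UNIV. \<Sum>k\<in>UNIV. u$i * v$j * w$k * T$i$j$k)"
proof -
  have "tri T u v w = (\<Sum>k\<in>UNIV. (\<Sum>j\<in>UNIV. (\<Sum>i\<in>UNIV. u$i * T$i$j$k) * v$j) * w$k)"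
    by (simp add: tri_def f2_def inner_vec_def matrix_vector_mult_def Tx_def)
  also have "\<dots> = (\<Sum>k\<in>UNIV. \<Sum>j\<in>UNIV. \<Sum>i\<in>UNIV. u$i * v$j * w$k * T$i$j$k)"
    by (simp add: sum_distrib_left sum_distrib_right mult_ac)
  also have "\<dots> = (\<Sum>i\<in>UNIV. \<Sum>j\<in>UNIV. \<Sum>k\<in>UNIV. u$i * v$j * w$k * T$i$j$k)"
    by (rule sum_reverse3)
  finally show ?thesis .
qed

lemma alt3D: assumes "alt3 T" shows "T$j$i$k = - T$i$j$k" "T$i$k$j = - T$i$j$k"
  using assms unfolding alt3_def by blast+

lemma alt3_cyclic: assumes "alt3 T" shows "T$i$j$k = T$j$k$i"
  using alt3D(1)[OF assms, of i j k] alt3D(2)[OF assms, of j k i] by simp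

lemma tri_swap12: assumes "alt3 T" shows "tri T v u w = - tri T u v w"
proof -
  have "v$i * u$j * w$k * T$i$j$k = - (u$j * v$i * w$k * T$j$i$k)" for i j k
    using alt3D(1)[OF assms, of j i k] by simp
  then show ?thesis unfolding tri_sum sum_negf[symmetric] by (subst sum.swap) simp
qed

lemma tri_swap23: assumes "alt3 T" shows "tri T u w v = - tri T u v w"
proof -
  have p: "u$i * w$j * v$k * T$i$j$k = - (u$i * v$k * w$j * T$i$k$j)" for i j k
    using alt3D(2)[OF assms, of i k j] by simp
  show ?thesis unfolding tri_sum sum_negf[symmetric]
    by (rule sum.cong[OF refl], subst sum.swap) (simp add: p)
qed

lemma tri_cyclic: assumes "alt3 T" shows "tri T u v w = tri T v w u"
  using tri_swap12[OF assms] tri_swap23[OF assms] by (metis minus_minus)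

lemma Tx_add: "Tx T (x + y) = Tx T x + Tx T y"
  by (simp add: Tx_def vec_eq_iff algebra_simps sum.distrib)

lemma Tx_scale: "Tx T (c *\<^sub>R x) = c *\<^sub>R Tx T x"
  by (simp add: Tx_def vec_eq_iff algebra_simps sum_distrib_left)

lemma Tx_neg: "Tx T (- x) = - Tx T x"
  by (simp add: Tx_def vec_eq_iff sum_negf)

lemma Tx_add_form: "Tx (T + S) x = Tx T x + Tx S x"
  by (simp add: Tx_def vec_eq_iff algebra_simps sum.distrib)

lemma Tx_zero_form: "Tx 0 x = 0"
  by (simp add: Tx_def vec_eq_iff)

lemma skew_Tx: assumes "alt3 T" shows "skew (Tx T u)"
proof -
  have "transpose (Tx T u) $ a $ b = (- Tx T u) $ a $ b" for a b
    unfolding transpose_def vec_lambda_beta uminus_vec_def Tx_nth sum_negf[symmetric]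
    by (rule sum.cong[OF refl]) (simp add: alt3D(2)[OF assms, of _ b a])
  then show ?thesis unfolding skew_def vec_eq_iff by blast
qed

lemma Tv_comp: "(Tx T u *v v) $ k = tri T u v (e k)"
  unfolding tri_def f2_def inner_e ..

lemma Tv_swap: assumes "alt3 T" shows "Tx T v *v u = - (Tx T u *v v)"
  by (simp add: vec_eq_iff Tv_comp tri_swap12[OF assms, of v u])

lemma Tv_self: assumes "alt3 T" shows "Tx T u *v u = 0"
proof -
  have "tri T u u w = 0" for w
    using tri_swap12[OF assms, of u u w] by linarith
  then show ?thesis by (simp add: vec_eq_iff Tv_comp)
qed

lemma L3gD: assumes "T \<in> L3g g" shows "alt3 T" "Tx T X \<in> g"
  using assms unfolding L3g_def by blast+

text \<open>The curvature tensor \<open>R^T(X,Y) = [T_X,T_Y] + 2 T_{T_X Y}\<close> is bilinear, so the array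
  \<open>RT T\<close> of its values on basis vectors represents it.\<close>

lemma RTfun_linear_left: "linear (\<lambda>u. RTfun T u v)"
proof (rule linearI)
  fix a b
  show "RTfun T (a + b) v = RTfun T a v + RTfun T b v"
    unfolding RTfun_def Tx_add matrix_add_rdistrib matrix_add_ldistrib
      matrix_vector_mult_add_rdistrib
    by (simp add: algebra_simps)
next
  fix c a
  show "RTfun T (c *\<^sub>R a) v = c *\<^sub>R RTfun T a v"
    unfolding RTfun_def Tx_scale matrix_scaleR_left matrix_scaleR_right matrix_vector_scaleR_left
    by (simp add: algebra_simps)
qed

lemma RTfun_linear_right: "linear (\<lambda>v. RTfun T u v)"
proof (rule linearI)
  fix a b
  show "RTfun T u (a + b) = RTfun T u a + RTfun T u b"
    unfolding RTfun_def Tx_add matrix_add_rdistrib matrix_add_ldistrib matrix_vector_right_distrib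
    by (simp add: algebra_simps)
next
  fix c a
  show "RTfun T u (c *\<^sub>R a) = c *\<^sub>R RTfun T u a"
    unfolding RTfun_def Tx_scale matrix_scaleR_left matrix_scaleR_right matrix_vector_mult_scaleR
    by (simp add: algebra_simps)
qed

lemma Rapp_RT: "Rapp (RT T) u v = RTfun T u v"
proof -
  have "RTfun T u v = (\<Sum>i\<in>UNIV. u$i *\<^sub>R RTfun T (e i) v)"
    by (rule linear_exp[OF RTfun_linear_left])
  also have "\<dots> = (\<Sum>i\<in>UNIV. u$i *\<^sub>R (\<Sum>j\<in>UNIV. v$j *\<^sub>R RTfun T (e i) (e j)))"
    by (subst linear_exp[OF RTfun_linear_right, of T "e _" v]) (rule refl)
  also have "\<dots> = Rapp (RT T) u v"
    by (simp add: Rapp_def RT_def scaleR_sum_right)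
  finally show ?thesis by simp
qed

lemma RT_eval:
  assumes "alt3 T"
  shows "f2 (RTfun T u v) w z = (Tx T u *v w) \<bullet> (Tx T v *v z) - (Tx T u *v z) \<bullet> (Tx T v *v w)
           + 2 * ((Tx T u *v v) \<bullet> (Tx T w *v z))"
proof -
  let ?A = "Tx T u" and ?B = "Tx T v" and ?C = "Tx T (Tx T u *v v)"
  have mv: "RTfun T u v *v w = ?A *v (?B *v w) - ?B *v (?A *v w) + 2 *\<^sub>R (?C *v w)"
    unfolding RTfun_def matrix_vector_mult_add_rdistrib matrix_vector_scaleR_left
      matrix_vector_mult_diff_rdistrib matrix_vector_mul_assoc ..
  have "(?A *v (?B *v w)) \<bullet> z = - ((?A *v z) \<bullet> (?B *v w))"
    by (rule skew_inner[OF skew_Tx[OF assms]])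
  moreover have "(?B *v (?A *v w)) \<bullet> z = - ((?A *v w) \<bullet> (?B *v z))"
    using skew_inner[OF skew_Tx[OF assms, of v], of "?A *v w" z] by (simp add: inner_commute)
  moreover have "(?C *v w) \<bullet> z = (Tx T u *v v) \<bullet> (Tx T w *v z)"
    using tri_cyclic[OF assms, of "Tx T u *v v" w z] by (simp add: tri_def f2_def inner_commute)
  ultimately show ?thesis
    unfolding f2_def mv inner_add_left inner_diff_left inner_scaleR_left by simp
qed

lemma RTfun_antisym: assumes "alt3 T" shows "RTfun T v u = - RTfun T u v"
  unfolding RTfun_def Tv_swap[OF assms, of v u] Tx_neg by (simp add: algebra_simps)

lemma skew_RTfun: "alt3 T \<Longrightarrow> skew (RTfun T u v)"
  unfolding RTfun_def by (intro skew_add skew_bracket skew_scale skew_Tx)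

lemma RTfun_in_g:
  assumes "lie_subalgebra_so g" "T \<in> L3g g" shows "RTfun T u v \<in> g"
  unfolding RTfun_def
  by (intro subspace_add[OF lieD(1)[OF assms(1)]] subspace_scale[OF lieD(1)[OF assms(1)]]
        lieD(3)[OF assms(1)] L3gD(2)[OF assms(2)])

text \<open>First Bianchi identity in components: the cyclic sum
  \<open>R(a,X)(b,c) + R(b,X)(c,a) + R(c,X)(a,b)\<close> vanishes, the nine terms cancelling in
  pairs after normalising with \<open>T_u v = - T_v u\<close>.\<close>
lemma bianchi_cyclic:
  assumes "alt3 T"
  shows "f2 (RTfun T a X) b c - f2 (RTfun T b X) a c + f2 (RTfun T c X) a b = 0"
proof -
  have s: "Tx T b *v a = - (Tx T a *v b)" "Tx T c *v a = - (Tx T a *v c)"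
    "Tx T c *v b = - (Tx T b *v c)" "Tx T a *v X = - (Tx T X *v a)"
    "Tx T b *v X = - (Tx T X *v b)" "Tx T c *v X = - (Tx T X *v c)"
    by (rule Tv_swap[OF assms])+
  show ?thesis
    unfolding RT_eval[OF assms] s inner_minus_left inner_minus_right
    by (simp add: inner_commute)
qed

lemma wedge12_e_comp:
  "wedge12 (e i) M $ a $ b $ c = (if a = i then f2 M (e b) (e c) else 0)
    - (if b = i then f2 M (e a) (e c) else 0) + (if c = i then f2 M (e a) (e b) else 0)"
  by (simp add: wedge12_def e_nth)

lemma bianchi:
  assumes "alt3 T" shows "(\<Sum>i\<in>UNIV. wedge12 (e i) (RTfun T (e i) X)) = 0"
proof -
  have "(\<Sum>i\<in>UNIV. wedge12 (e i) (RTfun T (e i) X)) $ a $ b $ c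
      = f2 (RTfun T (e a) X) (e b) (e c) - f2 (RTfun T (e b) X) (e a) (e c)
        + f2 (RTfun T (e c) X) (e a) (e b)" for a b c
    by (simp add: wedge12_e_comp sum.distrib sum_subtractf)
  then show ?thesis by (simp add: vec_eq_iff bianchi_cyclic[OF assms])
qed

lemma RT_in_Kspace:
  assumes "lie_subalgebra_so g" "T \<in> L3g g" shows "RT T \<in> Kspace g"
proof -
  have a: "alt3 T" by (rule L3gD(1)[OF assms(2)])
  have "RT T $ j $ i = - RT T $ i $ j" for i j
    unfolding RT_def by (simp add: RTfun_antisym[OF a, of "e j" "e i"])
  moreover have "skew (RT T $ i $ j)" for i j
    unfolding RT_def by (simp add: skew_RTfun[OF a])
  ultimately have "L2L2 (RT T)"
    unfolding L2L2_def by blast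
  then show ?thesis
    unfolding Kspace_def mem_Collect_eq Rapp_RT using RTfun_in_g[OF assms] bianchi[OF a] by blast
qed

lemma OmegaT_comp:
  "OmegaT T $ a $ b $ c $ d
     = (\<Sum>i\<in>UNIV. T$i$a$b * T$i$c$d - T$i$a$c * T$i$b$d + T$i$a$d * T$i$b$c)"
proof -
  have w: "wedge22 (Tx T (e i)) (Tx T (e i)) $ a $ b $ c $ d
         = 2 * (T$i$a$b * T$i$c$d - T$i$a$c * T$i$b$d + T$i$a$d * T$i$b$c)" for i
    by (simp add: wedge22_def f2_e Tx_e algebra_simps)
  have "OmegaT T $ a $ b $ c $ d
      = (1/2) * (\<Sum>i\<in>UNIV. wedge22 (Tx T (e i)) (Tx T (e i)) $ a $ b $ c $ d)"
    by (simp add: OmegaT_def)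
  also have "\<dots> = (1/2) * (\<Sum>i\<in>UNIV. 2 * (T$i$a$b * T$i$c$d - T$i$a$c * T$i$b$d
                                          + T$i$a$d * T$i$b$c))"
    by (simp only: w)
  finally show ?thesis by (simp only: sum_distrib_left[symmetric])
qed

lemma alt4_OmegaT: assumes "alt3 T" shows "alt4 (OmegaT T)"
proof -
  have "OmegaT T $ b $ a $ c $ d = - OmegaT T $ a $ b $ c $ d"
    and "OmegaT T $ a $ c $ b $ d = - OmegaT T $ a $ b $ c $ d"
    and "OmegaT T $ a $ b $ d $ c = - OmegaT T $ a $ b $ c $ d" for a b c d
    unfolding OmegaT_comp sum_negf[symmetric]
    by (rule sum.cong[OF refl], simp add: alt3D(2)[OF assms, of _ b a] algebra_simps,
        rule sum.cong[OF refl], simp add: alt3D(2)[OF assms, of _ c b] algebra_simps,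
        rule sum.cong[OF refl], simp add: alt3D(2)[OF assms, of _ d c] algebra_simps)
  then show ?thesis unfolding alt4_def by blast
qed

lemma ins2_basis: "ins2 B (e b) (e a) $ k $ j = B$a$b$j$k"
proof -
  have "ins2 B (e b) (e a) $ k $ j = (\<Sum>a'\<in>UNIV. e a $ a' * (\<Sum>b'\<in>UNIV. e b $ b' * B$a'$b'$j$k))"
    by (simp add: ins2_def sum_distrib_left mult.assoc)
  then show ?thesis by (simp only: sum_e)
qed

lemma ins2_exp: "ins2 B X Y = (\<Sum>a\<in>UNIV. \<Sum>b\<in>UNIV. (Y$a * X$b) *\<^sub>R ins2 B (e b) (e a))"
  by (simp add: vec_eq_iff ins2_basis) (simp add: ins2_def)

text \<open>Key identity for part (ii): \<open>e_b \<lrcorner> e_a \<lrcorner> \<Omega>^T = [T_b, T_a] + T_{T_a b}\<close>,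
  an element of \<open>g\<close> whenever all \<open>T_X\<close> are.\<close>
lemma OmegaT_contraction:
  assumes "alt3 T"
  shows "ins2 (OmegaT T) (e b) (e a)
       = Tx T (e b) ** Tx T (e a) - Tx T (e a) ** Tx T (e b) + Tx T (Tx T (e a) *v e b)"
proof -
  have "ins2 (OmegaT T) (e b) (e a) $ k $ j
       = (Tx T (e b) ** Tx T (e a) - Tx T (e a) ** Tx T (e b) + Tx T (Tx T (e a) *v e b)) $ k $ j"
    for k j
  proof -
    have "ins2 (OmegaT T) (e b) (e a) $ k $ j
        = (\<Sum>i\<in>UNIV. T$i$a$b * T$i$j$k - T$i$a$j * T$i$b$k + T$i$a$k * T$i$b$j)"
      by (simp only: ins2_basis OmegaT_comp)
    also have "\<dots> = (\<Sum>i\<in>UNIV. T$b$i$k * T$a$j$i - T$a$i$k * T$b$j$i + T$a$b$i * T$i$j$k)"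
    proof (rule sum.cong[OF refl])
      fix i
      have "T$i$a$b = T$a$b$i" "T$i$a$j = T$a$j$i" "T$i$b$j = T$b$j$i"
        by (rule alt3_cyclic[OF assms])+
      moreover have "T$b$i$k = - T$i$b$k" "T$a$i$k = - T$i$a$k"
        by (rule alt3D(1)[OF assms])+
      ultimately show "T$i$a$b * T$i$j$k - T$i$a$j * T$i$b$k + T$i$a$k * T$i$b$j
          = T$b$i$k * T$a$j$i - T$a$i$k * T$b$j$i + T$a$b$i * T$i$j$k"
        by (simp add: algebra_simps)
    qed
    also have "\<dots> = (Tx T (e b) ** Tx T (e a) - Tx T (e a) ** Tx T (e b)
                      + Tx T (Tx T (e a) *v e b)) $ k $ j"
      by (simp add: matrix_matrix_mult_def Tx_nth mv_e sum_e sum.distrib sum_subtractf)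
    finally show ?thesis .
  qed
  then show ?thesis by (simp add: vec_eq_iff)
qed

lemma OmegaT_in_L4g:
  assumes "lie_subalgebra_so g" "T \<in> L3g g" shows "OmegaT T \<in> L4g g"
proof -
  have a: "alt3 T" by (rule L3gD(1)[OF assms(2)])
  have sub: "subspace g" by (rule lieD(1)[OF assms(1)])
  have "ins2 (OmegaT T) X Y \<in> g" for X Y
    unfolding ins2_exp[of "OmegaT T" X Y] OmegaT_contraction[OF a]
    by (intro subspace_sum[OF sub] subspace_scale[OF sub] subspace_add[OF sub]
        lieD(3)[OF assms(1)] L3gD(2)[OF assms(2)])
  then show ?thesis unfolding L4g_def using alt4_OmegaT[OF a] by simp
qed

text \<open>Part (iii): \<open>R^T(u,v)(v,u) = -3 |T_u v|^2\<close>, so \<open>R^T = 0\<close> forces \<open>T = 0\<close>.\<close>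
lemma RT_diag: assumes "alt3 T"
  shows "f2 (RTfun T u v) v u = -3 * ((Tx T u *v v) \<bullet> (Tx T u *v v))"
  unfolding RT_eval[OF assms] Tv_swap[OF assms, of v u] Tv_self[OF assms] by simp

lemma RT_eq_0_iff: assumes "alt3 T" shows "RT T = 0 \<longleftrightarrow> T = 0"
proof
  assume h: "RT T = 0"
  have "T$i$j$k = 0" for i j k
  proof -
    have "RTfun T (e i) (e j) = 0" using h unfolding RT_def by (simp add: vec_eq_iff)
    then have "Tx T (e i) *v e j = 0" using RT_diag[OF assms, of "e i" "e j"] by (simp add: f2_def)
    then show ?thesis using Tv_comp[of T "e i" "e j" k] by (simp add: tri_basis)
  qed
  then show "T = 0" by (simp add: vec_eq_iff)
next
  assume "T = 0"
  then have "RTfun T u v = 0" for u v by (simp add: RTfun_def Tx_zero_form)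
  then show "RT T = 0" by (simp add: RT_def vec_eq_iff)
qed

lemma f2_add: "f2 (M + N) x y = f2 M x y + f2 N x y"
  by (simp add: f2_def matrix_vector_mult_add_rdistrib inner_add_left)

lemma f2_diff: "f2 (M - N) x y = f2 M x y - f2 N x y"
  by (simp add: f2_def matrix_vector_mult_diff_rdistrib inner_diff_left)

lemma f2_scale: "f2 (c *\<^sub>R M) x y = c * f2 M x y"
  by (simp add: f2_def matrix_vector_scaleR_left)

lemma Rapp_add: "Rapp (R1 + R2) X Y = Rapp R1 X Y + Rapp R2 X Y"
  by (simp add: Rapp_def scaleR_add_right sum.distrib)

lemma Rapp_diff: "Rapp (R1 - R2) X Y = Rapp R1 X Y - Rapp R2 X Y"
  by (simp add: Rapp_def scaleR_diff_right sum_subtractf)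

lemma Rapp_scale: "Rapp (c *\<^sub>R R) X Y = c *\<^sub>R Rapp R X Y"
  by (simp add: Rapp_def scaleR_sum_right ac_simps)

lemma wedge12_add: "wedge12 a (M + N) = wedge12 a M + wedge12 a N"
  by (simp add: wedge12_def f2_add vec_eq_iff algebra_simps)

lemma wedge12_scale: "wedge12 a (c *\<^sub>R M) = c *\<^sub>R wedge12 a M"
  by (simp add: wedge12_def f2_scale vec_eq_iff algebra_simps)

lemma L2L2_add: assumes "L2L2 R1" "L2L2 R2" shows "L2L2 (R1 + R2)"
proof -
  have a: "R1$j$i = - R1$i$j" "R2$j$i = - R2$i$j" "skew (R1$i$j)" "skew (R2$i$j)" for i j
    using assms unfolding L2L2_def by blast+
  have "(R1 + R2)$j$i = - (R1 + R2)$i$j" for i j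
    using a(1,2)[of i j] by simp
  moreover have "skew ((R1 + R2)$i$j)" for i j
    using a(3,4)[of i j] by (simp add: skew_add)
  ultimately show ?thesis unfolding L2L2_def by blast
qed

lemma L2L2_scale: assumes "L2L2 R" shows "L2L2 (c *\<^sub>R R)"
proof -
  have a: "R$j$i = - R$i$j" "skew (R$i$j)" for i j
    using assms unfolding L2L2_def by blast+
  have "(c *\<^sub>R R)$j$i = - (c *\<^sub>R R)$i$j" for i j
    using a(1)[of i j] by simp
  moreover have "skew ((c *\<^sub>R R)$i$j)" for i j
    using a(2)[of i j] by (simp add: skew_scale)
  ultimately show ?thesis unfolding L2L2_def by blast
qed

lemma Kspace_subspace: assumes "lie_subalgebra_so g" shows "subspace (Kspace g)"
proof -
  have sub: "subspace g" by (rule lieD(1)[OF assms])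
  have "0 \<in> Kspace g"
    by (simp add: Kspace_def L2L2_def skew_zero Rapp_def wedge12_def f2_def subspace_0[OF sub])
      (simp add: vec_eq_iff)
  moreover have "R1 + R2 \<in> Kspace g" if "R1 \<in> Kspace g" "R2 \<in> Kspace g" for R1 R2
    using that unfolding Kspace_def mem_Collect_eq Rapp_add wedge12_add sum.distrib
    by (simp add: L2L2_add subspace_add[OF sub])
  moreover have "c *\<^sub>R R \<in> Kspace g" if "R \<in> Kspace g" for c R
    using that unfolding Kspace_def mem_Collect_eq Rapp_scale wedge12_scale scaleR_sum_right[symmetric]
    by (simp add: L2L2_scale subspace_scale[OF sub])
  ultimately show ?thesis unfolding subspace_def by blast
qed

lemma inner2_e: "inner2 M N = (1/2) * (\<Sum>i\<in>UNIV. \<Sum>j\<in>UNIV. M$j$i * N$j$i)"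
  by (simp add: inner2_def f2_e)

lemma inner2_trace: "inner2 M N = (1/2) * trace (transpose M ** N)"
  by (simp add: inner2_e trace_def matrix_matrix_mult_def transpose_def)

lemma inner2_add_left: "inner2 (M + N) P = inner2 M P + inner2 N P"
  by (simp add: inner2_e algebra_simps sum.distrib)

lemma inner2_add_right: "inner2 P (M + N) = inner2 P M + inner2 P N"
  by (simp add: inner2_e algebra_simps sum.distrib)

lemma inner2_diff_left: "inner2 (M - N) P = inner2 M P - inner2 N P"
  by (simp add: inner2_e algebra_simps sum_subtractf)

lemma inner2_diff_right: "inner2 P (M - N) = inner2 P M - inner2 P N"
  by (simp add: inner2_e algebra_simps sum_subtractf)

lemma inner2_scale_left: "inner2 (c *\<^sub>R M) P = c * inner2 M P"
  by (simp add: inner2_e sum_distrib_left algebra_simps)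

lemma inner2_scale_right: "inner2 P (c *\<^sub>R M) = c * inner2 P M"
  by (simp add: inner2_e sum_distrib_left algebra_simps)

lemma inner2_commute: "inner2 M N = inner2 N M"
  by (simp add: inner2_e mult.commute)

lemma inner2_ad_invariant:
  assumes "skew A"
  shows "inner2 M (A ** N - N ** A) + inner2 (A ** M - M ** A) N = 0"
proof -
  have tA: "transpose A = - A" using assms by (simp add: skew_def)
  have tr: "transpose (A ** M - M ** A) = A ** transpose M - transpose M ** A"
    unfolding transpose_diff matrix_transpose_mul tA matrix_neg_left matrix_neg_right by simp
  have "inner2 (A ** M - M ** A) N
      = (1/2) * (trace (A ** transpose M ** N) - trace (transpose M ** A ** N))"
    unfolding inner2_trace tr matrix_diff_rdistrib trace_sub ..
  moreover have "inner2 M (A ** N - N ** A)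
      = (1/2) * (trace (transpose M ** A ** N) - trace (transpose M ** (N ** A)))"
    unfolding inner2_trace matrix_diff_ldistrib trace_sub by (simp add: matrix_mul_assoc)
  moreover have "trace (A ** transpose M ** N) = trace (transpose M ** (N ** A))"
    by (metis matrix_mul_assoc trace_mul_sym)
  ultimately show ?thesis by (simp add: algebra_simps)
qed

definition ST :: "real^'n^'n^'n \<Rightarrow> real^'n \<Rightarrow> real^'n \<Rightarrow> real" where
  "ST T X Y = inner2 (Tx T X) (Tx T Y)"

lemma ST_commute: "ST T X Y = ST T Y X"
  by (simp add: ST_def inner2_commute)

lemma ST_add_right: "ST T X (a + b) = ST T X a + ST T X b"
  by (simp add: ST_def Tx_add inner2_add_right)

lemma ST_scale_right: "ST T X (c *\<^sub>R a) = c * ST T X a"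
  by (simp add: ST_def Tx_scale inner2_scale_right)

lemma ST_expand: "ST T X Y = (\<Sum>i\<in>UNIV. X$i * ST T (e i) Y)"
proof -
  have "linear (\<lambda>X. ST T X Y)"
    by (rule linearI) (simp_all add: ST_def Tx_add Tx_scale inner2_add_left inner2_scale_left)
  from linear_exp[OF this, of X] show ?thesis by simp
qed

lemma trace_ST: "(\<Sum>j\<in>UNIV. ST T (e j) (e j)) = 3 * normsq3 T"
  by (simp add: ST_def inner2_e Tx_e normsq3_def power2_eq_square sum_distrib_left)

lemma normsq3_pos: assumes "T \<noteq> 0" shows "normsq3 T > 0"
proof -
  obtain i j k where ne: "T$i$j$k \<noteq> 0" using assms by (auto simp: vec_eq_iff)
  have "0 < (T$i$j$k)^2" using ne by simp
  also have "\<dots> \<le> (\<Sum>k\<in>UNIV. (T$i$j$k)^2)" by (rule member_le_sum) auto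
  also have "\<dots> \<le> (\<Sum>j\<in>UNIV. \<Sum>k\<in>UNIV. (T$i$j$k)^2)"
    by (rule member_le_sum[of j UNIV "\<lambda>j. \<Sum>k\<in>UNIV. (T$i$j$k)^2"]) (auto intro: sum_nonneg)
  also have "\<dots> \<le> (\<Sum>i\<in>UNIV. \<Sum>j\<in>UNIV. \<Sum>k\<in>UNIV. (T$i$j$k)^2)"
    by (rule member_le_sum[of i UNIV "\<lambda>i. \<Sum>j\<in>UNIV. \<Sum>k\<in>UNIV. (T$i$j$k)^2"])
      (auto intro!: sum_nonneg)
  finally show ?thesis unfolding normsq3_def by simp
qed

text \<open>For skew \<open>A\<close>, \<open>\<Sum>_j S_T(A e_j, e_j) = tr(A S_T) = 0\<close>: skew against symmetric.\<close>
lemma trace_skew_ST: assumes "skew A" shows "(\<Sum>j\<in>UNIV. ST T (A *v e j) (e j)) = 0"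
proof -
  have "(\<Sum>j\<in>UNIV. ST T (A *v e j) (e j)) = (\<Sum>j\<in>UNIV. \<Sum>i\<in>UNIV. A$i$j * ST T (e i) (e j))"
    by (subst ST_expand) (simp add: mv_e)
  also have "\<dots> = 0"
  proof (rule antisym_sum_zero)
    fix j i
    show "A$i$j * ST T (e i) (e j) = - (A$j$i * ST T (e j) (e i))"
      using skew_entry[OF assms, of i j] ST_commute[of T "e i" "e j"] by simp
  qed
  finally show ?thesis .
qed

lemma ricci_contraction:
  assumes "alt3 T"
  shows "(\<Sum>i\<in>UNIV. f2 (RTfun T (e i) X) Y (e i)) = -6 * ST T X Y"
proof -
  have pt: "f2 (RTfun T (e i) X) Y (e i) = -3 * ((Tx T (e i) *v X) \<bullet> (Tx T (e i) *v Y))" for i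
    unfolding RT_eval[OF assms] Tv_swap[OF assms, of X "e i"] Tv_swap[OF assms, of Y "e i"]
      Tv_self[OF assms] by (simp add: inner_commute)
  have "(\<Sum>i\<in>UNIV. f2 (RTfun T (e i) X) Y (e i))
      = -3 * (\<Sum>i\<in>UNIV. (Tx T (e i) *v X) \<bullet> (Tx T (e i) *v Y))"
    by (simp add: pt sum_distrib_left)
  also have "(\<Sum>i\<in>UNIV. (Tx T (e i) *v X) \<bullet> (Tx T (e i) *v Y))
      = (\<Sum>i\<in>UNIV. \<Sum>k\<in>UNIV. tri T X (e i) (e k) * tri T Y (e i) (e k))"
  proof (intro sum.cong refl)
    fix i
    have "tri T (e i) Z (e k) = - tri T Z (e i) (e k)" for Z k
      by (rule tri_swap12[OF assms])
    then show "(Tx T (e i) *v X) \<bullet> (Tx T (e i) *v Y)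
        = (\<Sum>k\<in>UNIV. tri T X (e i) (e k) * tri T Y (e i) (e k))"
      by (simp add: inner_vec_def Tv_comp)
  qed
  also have "\<dots> = 2 * ST T X Y"
    by (simp add: ST_def inner2_def tri_def)
  finally show ?thesis by simp
qed

definition act_Tx :: "real^'n^'n \<Rightarrow> real^'n^'n^'n \<Rightarrow> real^'n \<Rightarrow> real^'n^'n" where
  "act_Tx A T X = A ** Tx T X - Tx T X ** A - Tx T (A *v X)"

definition act :: "real^'n^'n \<Rightarrow> real^'n^'n^'n \<Rightarrow> real^'n^'n^'n" where
  "act A T = (\<chi> i j k. f2 (act_Tx A T (e i)) (e j) (e k))"

lemma act_Tx_linear: "linear (act_Tx A T)"
proof (rule linearI)
  fix x y
  show "act_Tx A T (x + y) = act_Tx A T x + act_Tx A T y"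
    unfolding act_Tx_def Tx_add matrix_add_ldistrib matrix_add_rdistrib matrix_vector_right_distrib
    by (simp add: algebra_simps)
next
  fix c x
  show "act_Tx A T (c *\<^sub>R x) = c *\<^sub>R act_Tx A T x"
    unfolding act_Tx_def Tx_scale matrix_scaleR_left matrix_scaleR_right matrix_vector_mult_scaleR
    by (simp add: algebra_simps)
qed

lemma Tx_act: "Tx (act A T) X = act_Tx A T X"
proof -
  have "Tx (act A T) X $ k $ j = act_Tx A T X $ k $ j" for k j
  proof -
    have "act_Tx A T X $ k $ j = (\<Sum>i\<in>UNIV. X$i *\<^sub>R act_Tx A T (e i)) $ k $ j"
      by (subst linear_exp[OF act_Tx_linear]) (rule refl)
    also have "\<dots> = Tx (act A T) X $ k $ j"
      by (simp add: Tx_nth act_def f2_e)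
    finally show ?thesis by simp
  qed
  then show ?thesis by (simp add: vec_eq_iff)
qed

lemma f2_act_Tx:
  assumes "skew A"
  shows "f2 (act_Tx A T X) y z = - tri T X y (A *v z) - tri T X (A *v y) z - tri T (A *v X) y z"
proof -
  have "f2 (act_Tx A T X) y z
      = (A *v (Tx T X *v y)) \<bullet> z - (Tx T X *v (A *v y)) \<bullet> z - (Tx T (A *v X) *v y) \<bullet> z"
    unfolding act_Tx_def f2_def matrix_vector_mult_diff_rdistrib inner_diff_left
      matrix_vector_mul_assoc ..
  also have "(A *v (Tx T X *v y)) \<bullet> z = - ((A *v z) \<bullet> (Tx T X *v y))"
    by (rule skew_inner[OF assms])
  finally show ?thesis by (simp add: tri_def f2_def inner_commute)
qed

lemma alt3_act: assumes "skew A" "alt3 T" shows "alt3 (act A T)"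
proof -
  have comp: "act A T $ i $ j $ k
      = - tri T (e i) (e j) (A *v e k) - tri T (e i) (A *v e j) (e k) - tri T (A *v e i) (e j) (e k)"
    for i j k
    by (simp add: act_def f2_act_Tx[OF assms(1)])
  show ?thesis unfolding alt3_def comp
  proof (intro allI conjI)
    fix i j k
    show "- tri T (e j) (e i) (A *v e k) - tri T (e j) (A *v e i) (e k) - tri T (A *v e j) (e i) (e k)
        = - (- tri T (e i) (e j) (A *v e k) - tri T (e i) (A *v e j) (e k)
             - tri T (A *v e i) (e j) (e k))"
      using tri_swap12[OF assms(2), of "e j" "e i" "A *v e k"]
        tri_swap12[OF assms(2), of "e j" "A *v e i" "e k"]
        tri_swap12[OF assms(2), of "A *v e j" "e i" "e k"] by simp
    show "- tri T (e i) (e k) (A *v e j) - tri T (e i) (A *v e k) (e j) - tri T (A *v e i) (e k) (e j)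
        = - (- tri T (e i) (e j) (A *v e k) - tri T (e i) (A *v e j) (e k)
             - tri T (A *v e i) (e j) (e k))"
      using tri_swap23[OF assms(2), of "e i" "e k" "A *v e j"]
        tri_swap23[OF assms(2), of "e i" "A *v e k" "e j"]
        tri_swap23[OF assms(2), of "A *v e i" "e k" "e j"] by simp
  qed
qed

lemma act_in_L3g:
  assumes "lie_subalgebra_so g" "T \<in> L3g g" "A \<in> g" shows "act A T \<in> L3g g"
proof -
  have sub: "subspace g" by (rule lieD(1)[OF assms(1)])
  have "Tx (act A T) X \<in> g" for X
    unfolding Tx_act act_Tx_def
    by (intro subspace_diff[OF sub] lieD(3)[OF assms(1)] assms(3) L3gD(2)[OF assms(2)])
  then show ?thesis
    unfolding L3g_def using alt3_act[OF lieD(2)[OF assms(1) assms(3)] L3gD(1)[OF assms(2)]] by simp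
qed

lemma L3g_add:
  assumes "lie_subalgebra_so g" "T \<in> L3g g" "S \<in> L3g g" shows "T + S \<in> L3g g"
proof -
  have aT: "alt3 T" and aS: "alt3 S" using assms(2,3) by (simp_all add: L3gD(1))
  have "alt3 (T + S)" unfolding alt3_def
  proof (intro allI conjI)
    fix i j k
    show "(T + S)$j$i$k = - (T + S)$i$j$k"
      using alt3D(1)[OF aT, of j i k] alt3D(1)[OF aS, of j i k] by simp
    show "(T + S)$i$k$j = - (T + S)$i$j$k"
      using alt3D(2)[OF aT, of i k j] alt3D(2)[OF aS, of i k j] by simp
  qed
  moreover have "Tx (T + S) X \<in> g" for X
    unfolding Tx_add_form
    by (intro subspace_add[OF lieD(1)[OF assms(1)]] L3gD(2)[OF assms(2)] L3gD(2)[OF assms(3)])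
  ultimately show ?thesis unfolding L3g_def by simp
qed

text \<open>Polarising \<open>S\<close> in the direction \<open>A\<cdot>T\<close> gives the derivative of \<open>S_T\<close> under the
  action of \<open>A\<close>: by ad-invariance of the inner product only the \<open>T_{AX}\<close> terms survive.\<close>
lemma ST_polarization:
  assumes "skew A"
  shows "ST (T + act A T) X Y - ST T X Y - ST (act A T) X Y = - ST T X (A *v Y) - ST T (A *v X) Y"
proof -
  have "ST (T + act A T) X Y - ST T X Y - ST (act A T) X Y
      = inner2 (Tx T X) (act_Tx A T Y) + inner2 (act_Tx A T X) (Tx T Y)"
    unfolding ST_def Tx_add_form Tx_act inner2_add_left inner2_add_right by simp
  also have "\<dots> = (inner2 (Tx T X) (A ** Tx T Y - Tx T Y ** A)
                  + inner2 (A ** Tx T X - Tx T X ** A) (Tx T Y))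
                 - ST T X (A *v Y) - ST T (A *v X) Y"
    unfolding act_Tx_def inner2_diff_left inner2_diff_right ST_def by simp
  also have "\<dots> = - ST T X (A *v Y) - ST T (A *v X) Y"
    using inner2_ad_invariant[OF assms] by simp
  finally show ?thesis .
qed

lemma dim1_multiple:
  assumes "subspace K" "dim K = 1" "v \<in> K" "v \<noteq> (0::'a::euclidean_space)" "w \<in> K"
  shows "\<exists>c. w = c *\<^sub>R v"
proof -
  have "span {v} = span K"
    by (rule dim_eq_span) (use assms(2-4) in auto)
  then have "w \<in> span {v}" using span_base[OF assms(5)] by simp
  then show ?thesis by (auto simp: span_singleton)
qed

text \<open>For \<open>A \<in> g\<close> the tensor \<open>R^{T+A\<cdot>T} - R^T - R^{A\<cdot>T}\<close> lies in \<open>K(g,V)\<close>; if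
  \<open>dim K(g,V) = 1\<close> it is a multiple \<open>c R^T\<close>, and contracting (Ricci contraction and
  polarisation) turns this into \<open>S(AX,Y) + S(X,AY) = -c S(X,Y)\<close>.\<close>
lemma ST_derivative_proportional:
  assumes lie: "lie_subalgebra_so g" and T: "T \<in> L3g g" and dim: "dim (Kspace g) = 1"
    and A: "A \<in> g" and nz: "T \<noteq> 0"
  obtains c where "\<And>X Y. ST T (A *v X) Y + ST T X (A *v Y) = - c * ST T X Y"
proof -
  have a: "alt3 T" by (rule L3gD(1)[OF T])
  let ?S = "act A T"
  have S: "?S \<in> L3g g" by (rule act_in_L3g[OF lie T A])
  have TS: "T + ?S \<in> L3g g" by (rule L3g_add[OF lie T S])
  have Ksub: "subspace (Kspace g)" by (rule Kspace_subspace[OF lie])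
  have "RT (T + ?S) - RT T - RT ?S \<in> Kspace g"
    by (intro subspace_diff[OF Ksub] RT_in_Kspace[OF lie] TS T S)
  moreover have "RT T \<noteq> 0" using RT_eq_0_iff[OF a] nz by simp
  ultimately obtain c where c: "RT (T + ?S) - RT T - RT ?S = c *\<^sub>R RT T"
    using dim1_multiple[OF Ksub dim RT_in_Kspace[OF lie T]] by blast
  have "ST T (A *v X) Y + ST T X (A *v Y) = - c * ST T X Y" for X Y
  proof -
    have "(\<Sum>i\<in>UNIV. f2 (Rapp (RT (T + ?S) - RT T - RT ?S) (e i) X) Y (e i))
        = (\<Sum>i\<in>UNIV. f2 (Rapp (c *\<^sub>R RT T) (e i) X) Y (e i))"
      by (simp only: c)
    then have "-6 * ST (T + ?S) X Y - -6 * ST T X Y - -6 * ST ?S X Y = c * (-6 * ST T X Y)"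
      unfolding Rapp_diff Rapp_scale Rapp_RT f2_diff f2_scale sum_subtractf
        sum_distrib_left[symmetric] ricci_contraction[OF L3gD(1)[OF TS]]
        ricci_contraction[OF a] ricci_contraction[OF L3gD(1)[OF S]] .
    then show ?thesis using ST_polarization[OF lieD(2)[OF lie A], of T X Y] by simp
  qed
  then show ?thesis using that by blast
qed

text \<open>Main step of part (iv): if \<open>dim K(g,V) = 1\<close> then \<open>S_T\<close> is \<open>g\<close>-invariant, since
  taking the trace of the previous identity gives \<open>-3c|T|^2 = tr(A S_T) = 0\<close>.\<close>
lemma ST_invariant:
  assumes lie: "lie_subalgebra_so g" and T: "T \<in> L3g g" and dim: "dim (Kspace g) = 1"
    and A: "A \<in> g"
  shows "ST T (A *v X) Y + ST T X (A *v Y) = 0"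
proof (cases "T = 0")
  case True
  then show ?thesis by (simp add: ST_def Tx_zero_form inner2_e)
next
  case False
  obtain c where eq: "\<And>X Y. ST T (A *v X) Y + ST T X (A *v Y) = - c * ST T X Y"
    using ST_derivative_proportional[OF lie T dim A False] by blast
  have "(\<Sum>j\<in>UNIV. ST T (A *v e j) (e j) + ST T (e j) (A *v e j))
      = - c * (\<Sum>j\<in>UNIV. ST T (e j) (e j))"
    by (simp add: eq sum_distrib_left)
  moreover have "(\<Sum>j\<in>UNIV. ST T (A *v e j) (e j) + ST T (e j) (A *v e j))
      = 2 * (\<Sum>j\<in>UNIV. ST T (A *v e j) (e j))"
    by (simp add: ST_commute[of T "e _"] sum_distrib_left)
  ultimately have "- c * (3 * normsq3 T) = 0"
    by (simp add: trace_ST trace_skew_ST[OF lieD(2)[OF lie A]])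
  then have "c = 0" using normsq3_pos[OF False] by simp
  then show ?thesis using eq[of X Y] by simp
qed

lemma quadratic_nonneg_linear_term:
  fixes a b :: real
  assumes h: "\<And>t. 0 \<le> 2*t*a + t^2*b" and b: "b \<ge> 0"
  shows "a = 0"
proof (rule ccontr)
  assume na: "a \<noteq> 0"
  define t where "t = - a / (b + 1)"
  have tt: "t * (b + 1) = - a" unfolding t_def using b by simp
  have "(b+1)^2 * (2*t*a + t^2*b) = 2*a*(t*(b+1))*(b+1) + (t*(b+1))^2*b"
    by (simp add: power2_eq_square algebra_simps)
  also have "\<dots> = 2*a*(-a)*(b+1) + (-a)^2*b" by (simp only: tt)
  also have "\<dots> = - (a^2 * (b + 2))" by (simp add: power2_eq_square algebra_simps)
  finally have "(b+1)^2 * (2*t*a + t^2*b) < 0" using na b by simp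
  moreover have "0 \<le> (b+1)^2 * (2*t*a + t^2*b)" using h[of t] by simp
  ultimately show False by simp
qed

text \<open>The quadratic form \<open>q(x) = x \<bullet> s x\<close> of a linear operator attains its maximum on
  the unit sphere, at some \<open>u\<close>; by homogeneity \<open>q(x) \<le> q(u) |x|^2\<close> everywhere.\<close>
lemma quadratic_form_max:
  fixes s :: "'a::euclidean_space \<Rightarrow> 'a"
  assumes lin: "linear s"
  obtains u where "norm u = 1" "\<And>x. x \<bullet> s x \<le> (u \<bullet> s u) * (x \<bullet> x)"
proof -
  define q where "q x = x \<bullet> s x" for x
  have cs: "continuous_on UNIV s"
    using lin linear_continuous_on linear_conv_bounded_linear by blast
  have cq: "continuous_on (sphere 0 1) q"
    unfolding q_def
    by (intro continuous_on_inner continuous_on_id continuous_on_subset[OF cs]) auto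
  obtain b :: 'a where "b \<in> Basis" using nonempty_Basis by blast
  then have ne: "sphere (0::'a) 1 \<noteq> {}" by (auto simp: norm_Basis)
  obtain u where u: "u \<in> sphere 0 1" and umax: "\<And>y. y \<in> sphere 0 1 \<Longrightarrow> q y \<le> q u"
    using continuous_attains_sup[OF compact_sphere ne cq] by blast
  have "q x \<le> q u * (x \<bullet> x)" for x
  proof (cases "x = 0")
    case True
    then show ?thesis by (simp add: q_def linear_0[OF lin])
  next
    case False
    have "q ((1 / norm x) *\<^sub>R x) \<le> q u"
      using umax[of "(1 / norm x) *\<^sub>R x"] False by simp
    then have "(1 / norm x)^2 * q x \<le> q u"
      by (simp add: q_def linear_scale[OF lin] power2_eq_square)
    then have "q x \<le> q u * (norm x)^2" using False by (simp add: field_simps)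
    then show ?thesis by (simp add: power2_norm_eq_inner)
  qed
  then show ?thesis using that u unfolding q_def by simp
qed

text \<open>A maximiser \<open>u\<close> as above is an eigenvector when \<open>s\<close> is symmetric: expanding
  \<open>q(u + t y) \<le> q(u) |u + t y|^2\<close> in \<open>t\<close> shows \<open>u \<bullet> s y = l (u \<bullet> y)\<close> for all \<open>y\<close>.\<close>
lemma quadratic_form_max_eigenvector:
  fixes s :: "'a::euclidean_space \<Rightarrow> 'a"
  assumes lin: "linear s" and sym: "\<And>x y. x \<bullet> s y = y \<bullet> s x"
    and u: "norm u = 1" and le: "\<And>x. x \<bullet> s x \<le> (u \<bullet> s u) * (x \<bullet> x)"
  shows "s u = (u \<bullet> s u) *\<^sub>R u"
proof -
  define l where "l = u \<bullet> s u"
  have uu: "u \<bullet> u = 1" using u by (simp add: norm_eq_1)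
  have eig: "u \<bullet> s y = l * (u \<bullet> y)" for y
  proof -
    define a where "a = l * (u \<bullet> y) - u \<bullet> s y"
    define b where "b = l * (y \<bullet> y) - y \<bullet> s y"
    have "0 \<le> 2*t*a + t^2*b" for t
    proof -
      have q_exp: "(u + t *\<^sub>R y) \<bullet> s (u + t *\<^sub>R y) = l + 2*t*(u \<bullet> s y) + t^2*(y \<bullet> s y)"
        by (simp add: l_def linear_add[OF lin] linear_scale[OF lin] inner_add_left
            inner_add_right power2_eq_square algebra_simps sym[of y u])
      have norm_exp: "(u + t *\<^sub>R y) \<bullet> (u + t *\<^sub>R y) = 1 + 2*t*(u \<bullet> y) + t^2*(y \<bullet> y)"
        by (simp add: inner_add_left inner_add_right inner_commute[of y u] uu power2_eq_square
            algebra_simps)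
      have "l + 2*t*(u \<bullet> s y) + t^2*(y \<bullet> s y) \<le> l * (1 + 2*t*(u \<bullet> y) + t^2*(y \<bullet> y))"
        using le[of "u + t *\<^sub>R y"] unfolding q_exp norm_exp l_def .
      moreover have "l * (1 + 2*t*(u \<bullet> y) + t^2*(y \<bullet> y))
          - (l + 2*t*(u \<bullet> s y) + t^2*(y \<bullet> s y)) = 2*t*a + t^2*b"
        by (simp add: a_def b_def algebra_simps)
      ultimately show ?thesis by linarith
    qed
    moreover have "b \<ge> 0" using le[of y] by (simp add: b_def l_def)
    ultimately have "a = 0" by (rule quadratic_nonneg_linear_term)
    then show ?thesis by (simp add: a_def)
  qed
  have "y \<bullet> s u = y \<bullet> (l *\<^sub>R u)" for y
    using sym[of y u] eig[of y] by (simp add: inner_commute[of y u])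
  then show ?thesis unfolding l_def[symmetric] using vector_eq_ldot by blast
qed

text \<open>Schur's lemma: a symmetric operator commuting with an irreducible \<open>g\<close> is scalar,
  since the eigenspace of the eigenvector found above is a non-zero \<open>g\<close>-invariant
  subspace.\<close>
lemma schur_symmetric:
  fixes s :: "real^'n \<Rightarrow> real^'n"
  assumes lin: "linear s" and sym: "\<And>x y. x \<bullet> s y = y \<bullet> s x"
    and comm: "\<And>A x. A \<in> g \<Longrightarrow> s (A *v x) = A *v s x" and irr: "irreducible_so g"
  shows "\<exists>l. \<forall>x. s x = l *\<^sub>R x"
proof -
  obtain u where u: "norm u = 1" and umax: "\<And>x. x \<bullet> s x \<le> (u \<bullet> s u) * (x \<bullet> x)"
    using quadratic_form_max[OF lin] by blast
  define l where "l = u \<bullet> s u"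
  have su: "s u = l *\<^sub>R u"
    unfolding l_def by (rule quadratic_form_max_eigenvector[OF lin sym u umax])
  define W where "W = {x. s x = l *\<^sub>R x}"
  have "subspace W"
    unfolding subspace_def W_def
    by (auto simp: linear_add[OF lin] linear_scale[OF lin] linear_0[OF lin] scaleR_add_right)
  moreover have "\<forall>A\<in>g. \<forall>x\<in>W. A *v x \<in> W"
    unfolding W_def using comm by (simp add: matrix_vector_mult_scaleR)
  ultimately have "W = {0} \<or> W = UNIV" using irr by (simp add: irreducible_so_def)
  moreover have "u \<in> W" "u \<noteq> 0" using su u by (auto simp: W_def)
  ultimately have "W = UNIV" by blast
  then show ?thesis unfolding W_def by blast
qed

definition ST_op :: "real^'n^'n^'n \<Rightarrow> real^'n \<Rightarrow> real^'n" where
  "ST_op T Y = (\<chi> k. ST T (e k) Y)"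

lemma ST_op_inner: "ST T X Y = X \<bullet> ST_op T Y"
  by (subst ST_expand) (simp add: ST_op_def inner_vec_def)

lemma ST_op_linear: "linear (ST_op T)"
  by (rule linearI) (simp_all add: ST_op_def vec_eq_iff ST_add_right ST_scale_right)

lemma ST_op_commute:
  assumes "skew A" and inv: "\<And>X Y. ST T (A *v X) Y + ST T X (A *v Y) = 0"
  shows "ST_op T (A *v Y) = A *v ST_op T Y"
proof -
  have "ST_op T (A *v Y) $ k = (A *v ST_op T Y) $ k" for k
  proof -
    have "ST_op T (A *v Y) $ k = - ST T (A *v e k) Y"
      using inv[of "e k" Y] by (simp add: ST_op_def)
    also have "\<dots> = - ((A *v e k) \<bullet> ST_op T Y)" by (simp add: ST_op_inner)
    also have "\<dots> = (A *v ST_op T Y) $ k"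
      using skew_inner[OF assms(1), of "e k" "ST_op T Y"] by (simp add: inner_e)
    finally show ?thesis .
  qed
  then show ?thesis by (simp add: vec_eq_iff)
qed

text \<open>Part (iv): by Schur's lemma \<open>S_T = \<lambda> g\<close>, and the trace fixes \<open>\<lambda> = 3|T|^2/n\<close>.\<close>
lemma ST_scalar:
  fixes T :: "real^'n^'n^'n"
  assumes lie: "lie_subalgebra_so g" and T: "T \<in> L3g g" and irr: "irreducible_so g"
    and dim: "dim (Kspace g) = 1"
  shows "ST T X Y = 3 / real CARD('n) * normsq3 T * (X \<bullet> Y)"
proof -
  have "ST_op T (A *v x) = A *v ST_op T x" if "A \<in> g" for A x
    using ST_op_commute[OF lieD(2)[OF lie that] ST_invariant[OF lie T dim that]] .
  moreover have "x \<bullet> ST_op T y = y \<bullet> ST_op T x" for x y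
    by (metis ST_op_inner ST_commute)
  ultimately obtain l where l: "\<And>x. ST_op T x = l *\<^sub>R x"
    using schur_symmetric[OF ST_op_linear _ _ irr] by blast
  then have ST_l: "ST T X Y = l * (X \<bullet> Y)" for X Y by (simp add: ST_op_inner)
  have "3 * normsq3 T = (\<Sum>j\<in>(UNIV::'n set). ST T (e j) (e j))" by (rule trace_ST[symmetric])
  also have "\<dots> = l * real CARD('n)" by (simp add: ST_l inner_e e_nth)
  finally have "l = 3 / real CARD('n) * normsq3 T" by (simp add: field_simps)
  then show ?thesis using ST_l by simp
qed

theorem lemma3p1:
  fixes g :: "(real^'n^'n) set" and T :: "real^'n^'n^'n"
  assumes "lie_subalgebra_so g" and "T \<in> L3g g"
  shows "RT T \<in> Kspace g
       \<and> OmegaT T \<in> L4g g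
       \<and> (RT T = 0 \<longleftrightarrow> T = 0)
       \<and> (irreducible_so g \<and> dim (Kspace g) = 1 \<longrightarrow>
           (\<forall>X Y. inner2 (Tx T X) (Tx T Y) = 3 / real CARD('n) * normsq3 T * (X \<bullet> Y)))"
  using RT_in_Kspace[OF assms] OmegaT_in_L4g[OF assms] RT_eq_0_iff[OF L3gD(1)[OF assms(2)]]
    ST_scalar[OF assms, unfolded ST_def] by blast
end
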